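(* For every tree $T$, $\gamma^{DLD}(T)=\beta(T)$.
   Context: For a vertex $u$, $N(u)$ is its set of neighbours and $N[u]=N(u)\cup\{u\}$. A code in a graph with vertex set $V$ is a non-empty subset $C\subseteq V$; $I(C;u)=N[u]\cap C$. A code $C$ is solid-locating-dominating if $I(C;u)\ne\emptyset$ for every $u\in V\setminus C$ and $I(C;u)\not\subseteq I(C;v)$ for all distinct $u,v\in V\setminus C$; $\gamma^{DLD}$ denotes the minimum size of such a code. $\beta(T)$ is the independence number of $T$ (maximum size of a set of pairwise non-adjacent vertices). *)

theory Defs
  imports Main
begin

definition simple_graph :: "'a set \<Rightarrow> 'a set set \<Rightarrow> bool" where
  "simple_graph V E \<longleftrightarrow> finite V \<and> (\<forall>e\<in>E. e \<subseteq> V \<and> card e = 2)"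

definition adj :: "'a set set \<Rightarrow> 'a \<Rightarrow> 'a \<Rightarrow> bool" where
  "adj E u v \<longleftrightarrow> {u, v} \<in> E"

definition connected_graph :: "'a set \<Rightarrow> 'a set set \<Rightarrow> bool" where
  "connected_graph V E \<longleftrightarrow> V \<noteq> {} \<and>
     (\<forall>u\<in>V. \<forall>v\<in>V. (u, v) \<in> {(x, y). x \<in> V \<and> y \<in> V \<and> adj E x y}\<^sup>*)"

definition is_tree :: "'a set \<Rightarrow> 'a set set \<Rightarrow> bool" where
  "is_tree V E \<longleftrightarrow> simple_graph V E \<and> connected_graph V E \<and> card E + 1 = card V"

definition open_nbhd :: "'a set \<Rightarrow> 'a set set \<Rightarrow> 'a \<Rightarrow> 'a set" where
  "open_nbhd V E u = {v \<in> V. adj E u v}"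

definition closed_nbhd :: "'a set \<Rightarrow> 'a set set \<Rightarrow> 'a \<Rightarrow> 'a set" where
  "closed_nbhd V E u = insert u (open_nbhd V E u)"

definition I_code :: "'a set \<Rightarrow> 'a set set \<Rightarrow> 'a set \<Rightarrow> 'a \<Rightarrow> 'a set" where
  "I_code V E C u = closed_nbhd V E u \<inter> C"

definition solid_locating_dominating :: "'a set \<Rightarrow> 'a set set \<Rightarrow> 'a set \<Rightarrow> bool" where
  "solid_locating_dominating V E C \<longleftrightarrow> C \<noteq> {} \<and> C \<subseteq> V \<and>
     (\<forall>u \<in> V - C. I_code V E C u \<noteq> {}) \<and>
     (\<forall>u \<in> V - C. \<forall>v \<in> V - C. u \<noteq> v \<longrightarrow> \<not> (I_code V E C u \<subseteq> I_code V E C v))"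

definition gamma_DLD :: "'a set \<Rightarrow> 'a set set \<Rightarrow> nat" where
  "gamma_DLD V E = (LEAST k. \<exists>C. solid_locating_dominating V E C \<and> card C = k)"

definition independent_set :: "'a set \<Rightarrow> 'a set set \<Rightarrow> 'a set \<Rightarrow> bool" where
  "independent_set V E S \<longleftrightarrow> S \<subseteq> V \<and> (\<forall>u\<in>S. \<forall>v\<in>S. \<not> adj E u v)"

definition independence_number :: "'a set \<Rightarrow> 'a set set \<Rightarrow> nat" where
  "independence_number V E = Max {card S | S. independent_set V E S}"

end

theory Submission
  imports Defs
begin

text \<open>
  Root the tree. For the lower bound, every solid-locating-dominating code \<open>C\<close> admits an
  injective choice of a codeword \<open>\<phi> s \<in> I(C;s)\<close> for each non-codeword \<open>s\<close>: take a child of \<open>s\<close>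
  if \<open>I(C;s)\<close> contains one, and otherwise the parent, which is then all of \<open>I(C;s)\<close>; the
  non-inclusion condition makes this injective. As \<open>\<phi>\<close> maps the non-codewords of an independent
  set \<open>S\<close> to codewords outside \<open>S\<close>, we get \<open>|S| \<le> |C|\<close>.

  For the upper bound, we split the vertices into an independent set \<open>S\<close> and a set \<open>U\<close> in which
  every vertex has a private neighbour outside \<open>U\<close>, so that \<open>V - U\<close> is a solid-locating-dominating
  code of size \<open>|S|\<close>. This is done by repeatedly removing a deepest leaf \<open>l\<close> together with its
  parent \<open>p\<close> and all siblings of \<open>l\<close>: the leaves go to \<open>S\<close>, and either \<open>p\<close> (with private
  neighbour \<open>l\<close>) or \<open>l\<close> (with private neighbour \<open>p\<close>) goes to \<open>U\<close>, depending on whether the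
  parent of \<open>p\<close> already lies in \<open>U\<close>.
\<close>

section \<open>Graphs in general\<close>

lemma adj_sym: "adj E u v = adj E v u"
  by (simp add: adj_def insert_commute)

lemma I_code_not_in_code:
  "c \<in> I_code V E C s \<Longrightarrow> s \<notin> C \<Longrightarrow> c \<in> C \<and> c \<in> V \<and> adj E s c"
  by (auto simp: I_code_def closed_nbhd_def open_nbhd_def)

lemma card_independent_le_code:
  assumes "finite V" "C \<subseteq> V" "independent_set V E S"
    and inj: "inj_on \<phi> (V - C)" and \<phi>: "\<forall>s\<in>V - C. \<phi> s \<in> I_code V E C s"
  shows "card S \<le> card C"
proof -
  have SV: "S \<subseteq> V" and indep: "\<forall>u\<in>S. \<forall>v\<in>S. \<not> adj E u v"
    using assms(3) by (auto simp: independent_set_def)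
  have "\<phi> ` (S - C) \<subseteq> C - S"
  proof
    fix x assume "x \<in> \<phi> ` (S - C)"
    then obtain s where s: "s \<in> S - C" "x = \<phi> s"
      by blast
    then have "x \<in> I_code V E C s" "s \<notin> C"
      using \<phi> SV by auto
    then have "x \<in> C \<and> adj E s x"
      by (meson I_code_not_in_code)
    then show "x \<in> C - S"
      using indep s by auto
  qed
  moreover have "inj_on \<phi> (S - C)"
    by (rule inj_on_subset[OF inj]) (use SV in blast)
  ultimately have "card (S - C) \<le> card (C - S)"
    using assms(1,2) by (intro card_inj_on_le) (auto intro: finite_subset)
  moreover have "finite S" "finite C"
    using assms(1,2) SV by (auto intro: finite_subset)
  ultimately show ?thesis
    by (metis Int_commute card_Int_Diff add_le_cancel_left)
qed

definition private_neighbours :: "'a set set \<Rightarrow> 'a set \<Rightarrow> 'a set \<Rightarrow> ('a \<Rightarrow> 'a) \<Rightarrow> bool" where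
  "private_neighbours E W U m \<longleftrightarrow> U \<subseteq> W \<and>
     (\<forall>u\<in>U. m u \<in> W - U \<and> adj E u (m u) \<and> (\<forall>u'\<in>U. u' \<noteq> u \<longrightarrow> \<not> adj E (m u) u'))"

definition private_neighbour_split :: "'a set set \<Rightarrow> 'a set \<Rightarrow> bool" where
  "private_neighbour_split E W \<longleftrightarrow>
     (\<exists>U S m. private_neighbours E W U m \<and> independent_set W E S \<and> card S + card U = card W)"

lemma independent_set_Un_leaves:
  assumes "independent_set W' E S" "W' \<subseteq> W" "L \<subseteq> W"
    and leaves: "\<And>x y. x \<in> L \<Longrightarrow> y \<in> W \<Longrightarrow> adj E y x \<Longrightarrow> y = p" and "p \<notin> S \<union> L"
  shows "independent_set W E (S \<union> L)"
  using assms adj_sym[of E] unfolding independent_set_def by blast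

lemma private_neighbours_solid_locating_dominating:
  assumes "V \<noteq> {}" "private_neighbours E V U m"
  shows "solid_locating_dominating V E (V - U)"
proof -
  have m: "m u \<in> I_code V E (V - U) u" if "u \<in> U" for u
    using assms(2) that by (auto simp: private_neighbours_def I_code_def closed_nbhd_def open_nbhd_def)
  have m_private: "m u \<notin> I_code V E (V - U) v" if "u \<in> U" "v \<in> U" "u \<noteq> v" for u v
    using assms(2) that adj_sym
    by (fastforce simp: private_neighbours_def I_code_def closed_nbhd_def open_nbhd_def)
  have "V - U \<noteq> {}"
    using assms by (auto simp: private_neighbours_def)
  moreover have "V - (V - U) = U"
    using assms(2) by (auto simp: private_neighbours_def)
  ultimately show ?thesis
    unfolding solid_locating_dominating_def using m m_private by blast
qed

lemma private_neighbours_insert_centre: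
  assumes pn: "private_neighbours E W' U m" and "W' \<subseteq> W" "p \<in> W - W'" "l \<in> W - W'" "p \<noteq> l"
    and "adj E p l" "\<forall>y\<in>W'. \<not> adj E y l" "\<forall>u\<in>U. \<not> adj E (m u) p"
  shows "private_neighbours E W (insert p U) (m(p := l))"
proof -
  have U: "U \<subseteq> W'" "\<forall>u\<in>U. m u \<in> W' - U \<and> adj E u (m u) \<and> (\<forall>u'\<in>U. u' \<noteq> u \<longrightarrow> \<not> adj E (m u) u')"
    using pn by (auto simp: private_neighbours_def)
  have "(m(p := l)) u \<in> W - insert p U \<and> adj E u ((m(p := l)) u) \<and>
      (\<forall>u'\<in>insert p U. u' \<noteq> u \<longrightarrow> \<not> adj E ((m(p := l)) u) u')"
    if u: "u \<in> insert p U" for u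
  proof (cases "u = p")
    case True
    then show ?thesis
      using U assms(2-8) adj_sym[of E _ l] by auto
  next
    case False
    then show ?thesis
      using u U assms(2-8) by auto
  qed
  then show ?thesis
    using U(1) assms(2-4) by (auto simp: private_neighbours_def)
qed

lemma private_neighbours_insert_leaf:
  assumes pn: "private_neighbours E W' U m" and "W' \<subseteq> W" "p \<in> W - W'" "l \<in> W - W'" "p \<noteq> l"
    and "adj E l p" "\<forall>y\<in>W'. \<not> adj E y l" "\<forall>u\<in>U. \<not> adj E u p"
  shows "private_neighbours E W (insert l U) (m(l := p))"
proof -
  have U: "U \<subseteq> W'" "\<forall>u\<in>U. m u \<in> W' - U \<and> adj E u (m u) \<and> (\<forall>u'\<in>U. u' \<noteq> u \<longrightarrow> \<not> adj E (m u) u')"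
    using pn by (auto simp: private_neighbours_def)
  have "(m(l := p)) u \<in> W - insert l U \<and> adj E u ((m(l := p)) u) \<and>
      (\<forall>u'\<in>insert l U. u' \<noteq> u \<longrightarrow> \<not> adj E ((m(l := p)) u) u')"
    if u: "u \<in> insert l U" for u
  proof (cases "u = l")
    case True
    then show ?thesis
      using U assms(2-8) adj_sym[of E p] by auto
  next
    case False
    then show ?thesis
      using u U assms(2-8) adj_sym[of E _ l] by auto
  qed
  then show ?thesis
    using U(1) assms(2-4) by (auto simp: private_neighbours_def)
qed

lemma gamma_DLD_eq_independence_numberI:
  assumes "finite V"
    and lower: "\<And>C S. solid_locating_dominating V E C \<Longrightarrow> independent_set V E S \<Longrightarrow> card S \<le> card C"
    and "solid_locating_dominating V E C" "independent_set V E S" "card C = card S"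
  shows "gamma_DLD V E = independence_number V E"
proof -
  define K where "K = {card S | S. independent_set V E S}"
  have "K \<subseteq> card ` Pow V"
    unfolding K_def independent_set_def by auto
  then have "finite K"
    using assms(1) finite_subset by blast
  moreover have SK: "card S \<in> K"
    using assms(4) unfolding K_def by auto
  ultimately have "Max K \<in> K"
    by (intro Max_in) auto
  then obtain S0 where S0: "independent_set V E S0" "card S0 = Max K"
    unfolding K_def by auto
  let ?Q = "\<lambda>k. \<exists>C. solid_locating_dominating V E C \<and> card C = k"
  obtain C0 where C0: "solid_locating_dominating V E C0" "card C0 = gamma_DLD V E"
    using LeastI_ex[of ?Q] assms(3) unfolding gamma_DLD_def by blast
  have "Max K \<le> gamma_DLD V E"
    using lower[OF C0(1) S0(1)] S0(2) C0(2) by simp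
  moreover have "gamma_DLD V E \<le> card C"
    unfolding gamma_DLD_def using assms(3) by (intro Least_le) blast
  moreover have "card S \<le> Max K"
    using \<open>finite K\<close> SK by simp
  ultimately show ?thesis
    using assms(5) unfolding independence_number_def K_def by simp
qed

section \<open>Rooted trees\<close>

locale rooted_tree =
  fixes V :: "'a set" and E :: "'a set set" and r :: 'a and par :: "'a \<Rightarrow> 'a" and dep :: "'a \<Rightarrow> nat"
  assumes finite_V: "finite V" and root_in_V: "r \<in> V"
    and parent_in_V: "\<And>v. v \<in> V \<Longrightarrow> v \<noteq> r \<Longrightarrow> par v \<in> V"
    and adj_parent: "\<And>v. v \<in> V \<Longrightarrow> v \<noteq> r \<Longrightarrow> adj E v (par v)"
    and dep_parent: "\<And>v. v \<in> V \<Longrightarrow> v \<noteq> r \<Longrightarrow> dep v = Suc (dep (par v))"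
    and dep_root: "dep r = 0"
    and not_adj_self: "\<And>u. \<not> adj E u u"
    and adj_parent_cases: "\<And>u v. u \<in> V \<Longrightarrow> v \<in> V \<Longrightarrow> adj E u v \<Longrightarrow>
      (u \<noteq> r \<and> par u = v) \<or> (v \<noteq> r \<and> par v = u)"
begin

lemma sld_distinct_representatives:
  assumes sld: "solid_locating_dominating V E C"
  obtains \<phi> where "inj_on \<phi> (V - C)" "\<forall>s\<in>V - C. \<phi> s \<in> I_code V E C s"
proof -
  let ?I = "I_code V E C"
  have "\<exists>c. c \<in> ?I s \<and> ((c \<noteq> r \<and> par c = s) \<or> ?I s = {c})" if s: "s \<in> V - C" for s
  proof (cases "\<exists>c\<in>?I s. c \<noteq> r \<and> par c = s")
    case False
    have "c = par s" if "c \<in> ?I s" for c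
    proof -
      have "c \<in> V" "adj E s c"
        using I_code_not_in_code[OF that] s by auto
      then show ?thesis
        using adj_parent_cases[of s c] s False that by blast
    qed
    moreover have "?I s \<noteq> {}"
      using sld s by (simp add: solid_locating_dominating_def)
    ultimately show ?thesis by blast
  qed blast
  then obtain \<phi> where \<phi>: "\<forall>s\<in>V - C. \<phi> s \<in> ?I s \<and> ((\<phi> s \<noteq> r \<and> par (\<phi> s) = s) \<or> ?I s = {\<phi> s})"
    by metis
  \<comment> \<open>If one of two colliding representatives is not a child, its whole \<open>I\<close>-set is the common
      value, which lies in the other \<open>I\<close>-set.\<close>
  have "inj_on \<phi> (V - C)"
  proof (rule inj_onI, rule ccontr)
    fix s t assume st: "s \<in> V - C" "t \<in> V - C" "\<phi> s = \<phi> t" "s \<noteq> t"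
    then have "?I s \<subseteq> ?I t \<or> ?I t \<subseteq> ?I s"
      using \<phi> by (metis empty_subsetI insert_subset)
    then show False
      using sld st by (auto simp: solid_locating_dominating_def)
  qed
  then show thesis
    using \<phi> that by blast
qed

lemma card_independent_le_sld:
  "solid_locating_dominating V E C \<Longrightarrow> independent_set V E S \<Longrightarrow> card S \<le> card C"
  by (metis card_independent_le_code finite_V sld_distinct_representatives solid_locating_dominating_def)

definition children :: "'a set \<Rightarrow> 'a \<Rightarrow> 'a set" where
  "children W p = {x \<in> W. x \<noteq> r \<and> par x = p}"

definition parent_closed :: "'a set \<Rightarrow> bool" where
  "parent_closed W \<longleftrightarrow> W \<subseteq> V \<and> (\<forall>v\<in>W. v \<noteq> r \<longrightarrow> par v \<in> W)"

context
  fixes W l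
  assumes W_sub: "W \<subseteq> V" and W_closed: "\<forall>v\<in>W. v \<noteq> r \<longrightarrow> par v \<in> W"
    and l_in: "l \<in> W" and l_deepest: "\<forall>x\<in>W. dep x \<le> dep l" and l_nonroot: "l \<noteq> r"
begin

lemma parent_deepest_in: "par l \<in> W"
  using W_closed l_in l_nonroot by blast

lemma deepest_in_children: "l \<in> children W (par l)"
  using l_in l_nonroot by (simp add: children_def)

lemma parent_deepest_not_in_children: "par l \<notin> children W (par l)"
  using dep_parent W_sub parent_deepest_in by (force simp: children_def)

lemma children_of_parent_deepest_are_leaves:
  assumes "x \<in> children W (par l)" "y \<in> W" "adj E y x"
  shows "y = par l"
proof -
  have x: "x \<in> W" "x \<noteq> r" "par x = par l"
    using assms(1) by (auto simp: children_def)
  then have "dep x = dep l"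
    using dep_parent W_sub l_in l_nonroot by (metis subsetD)
  have "\<not> (y \<noteq> r \<and> par y = x)"
  proof
    assume "y \<noteq> r \<and> par y = x"
    then have "dep y = Suc (dep l)"
      using dep_parent[of y] assms(2) W_sub \<open>dep x = dep l\<close> by auto
    then show False
      using l_deepest assms(2) by fastforce
  qed
  then show ?thesis
    using adj_parent_cases[of y x] assms W_sub x by blast
qed

lemma adj_parent_deepest:
  assumes "y \<in> W - insert (par l) (children W (par l))" "adj E y (par l)"
  shows "par l \<noteq> r \<and> y = par (par l)"
  using adj_parent_cases[of y "par l"] assms W_sub parent_deepest_in by (auto simp: children_def)

lemma parent_closed_remove_children:
  "parent_closed (W - insert (par l) (children W (par l)))"
  unfolding parent_closed_def
proof (intro conjI ballI impI)
  fix v assume v: "v \<in> W - insert (par l) (children W (par l))" "v \<noteq> r"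
  then have "par v \<noteq> par l"
    by (auto simp: children_def)
  moreover have "par v \<notin> children W (par l)"
    using v children_of_parent_deepest_are_leaves[of "par v" v] adj_parent W_sub by (auto simp: adj_sym)
  ultimately show "par v \<in> W - insert (par l) (children W (par l))"
    using v W_closed by blast
qed (use W_sub in blast)

lemma private_neighbour_split_remove_children:
  assumes "private_neighbour_split E (W - insert (par l) (children W (par l)))"
  shows "private_neighbour_split E W"
proof -
  define p where "p = par l"
  define L where "L = children W p"
  define W' where "W' = W - insert p L"
  obtain U S m where IH: "private_neighbours E W' U m" "independent_set W' E S" "card S + card U = card W'"
    using assms by (auto simp: private_neighbour_split_def W'_def L_def p_def)
  have pL: "p \<in> W" "l \<in> L" "p \<notin> L" "L \<subseteq> W"
    using parent_deepest_in deepest_in_children parent_deepest_not_in_children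
    by (auto simp: p_def L_def children_def)
  have leaves: "\<And>x y. x \<in> L \<Longrightarrow> y \<in> W \<Longrightarrow> adj E y x \<Longrightarrow> y = p"
    using children_of_parent_deepest_are_leaves by (simp add: p_def L_def)
  have W'_p: "\<And>y. y \<in> W' \<Longrightarrow> adj E y p \<Longrightarrow> p \<noteq> r \<and> y = par p"
    using adj_parent_deepest by (simp add: W'_def p_def L_def)
  have W'_l: "\<forall>y\<in>W'. \<not> adj E y l"
    using leaves pL by (auto simp: W'_def)
  have lp: "p \<in> W - W'" "l \<in> W - W'" "p \<noteq> l" "W' \<subseteq> W" "adj E l p"
    using pL adj_parent l_in l_nonroot W_sub by (auto simp: W'_def p_def)
  have "p \<notin> S \<union> L"
    using IH(2) lp(1) pL(3) by (auto simp: independent_set_def)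
  with leaves have "independent_set W E (S \<union> L)"
    by (rule independent_set_Un_leaves[OF IH(2) lp(4) pL(4)])
  moreover have "card (S \<union> L) + card (insert x U) = card W" if "x \<in> insert p L" for x
  proof -
    have sub: "U \<subseteq> W'" "S \<subseteq> W'"
      using IH(1,2) by (auto simp: private_neighbours_def independent_set_def)
    have fin: "finite W'" "finite L"
      using W_sub finite_V pL(4) by (auto simp: W'_def intro: finite_subset)
    have "W = W' \<union> insert p L" "W' \<inter> insert p L = {}"
      using pL by (auto simp: W'_def)
    then have "card W = card W' + Suc (card L)"
      using fin pL(3) by (simp add: card_Un_disjoint)
    moreover have "card (S \<union> L) = card S + card L"
      using sub fin by (intro card_Un_disjoint) (auto simp: W'_def intro: finite_subset)
    moreover have "card (insert x U) = Suc (card U)"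
      using sub fin that by (intro card_insert_disjoint) (auto simp: W'_def intro: finite_subset)
    ultimately show ?thesis
      using IH(3) by simp
  qed
  moreover have "private_neighbours E W (insert p U) (m(p := l)) \<or> private_neighbours E W (insert l U) (m(l := p))"
  proof (cases "p \<noteq> r \<and> par p \<in> U")
    case True
    then have "\<forall>u\<in>U. \<not> adj E (m u) p"
      using IH(1) W'_p by (fastforce simp: private_neighbours_def)
    then show ?thesis
      using private_neighbours_insert_centre[OF IH(1) lp(4,1,2,3)] lp(5) W'_l adj_sym by metis
  next
    case False
    then have "\<forall>u\<in>U. \<not> adj E u p"
      using IH(1) W'_p by (auto simp: private_neighbours_def)
    then show ?thesis
      using private_neighbours_insert_leaf[OF IH(1) lp(4,1,2,3,5) W'_l] by blast
  qed
  ultimately show ?thesis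
    unfolding private_neighbour_split_def using pL by blast
qed

end

lemma deepest_root_singleton:
  assumes "parent_closed W" "r \<in> W" "\<forall>x\<in>W. dep x \<le> dep r"
  shows "W = {r}"
  using assms dep_parent dep_root by (fastforce simp: parent_closed_def)

lemma parent_closed_private_neighbour_split:
  "parent_closed W \<Longrightarrow> private_neighbour_split E W"
proof (induction "card W" arbitrary: W rule: less_induct)
  case less
  have W_fin: "finite W"
    using less.prems finite_V finite_subset by (auto simp: parent_closed_def)
  show ?case
  proof (cases "W = {}")
    case True
    then show ?thesis
      by (auto simp: private_neighbour_split_def private_neighbours_def independent_set_def)
  next
    case False
    then have "Max (dep ` W) \<in> dep ` W"
      using W_fin by simp
    then obtain l where l: "l \<in> W" "dep l = Max (dep ` W)"
      by auto
    then have l: "l \<in> W" "\<forall>x\<in>W. dep x \<le> dep l"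
      using W_fin by simp_all
    show ?thesis
    proof (cases "l = r")
      case True
      then have "W = {r}"
        using deepest_root_singleton less.prems l by blast
      then show ?thesis
        using not_adj_self unfolding private_neighbour_split_def
        by (intro exI[of _ "{}"] exI[of _ "{r}"]) (auto simp: private_neighbours_def independent_set_def)
    next
      case False
      let ?W' = "W - insert (par l) (children W (par l))"
      have prems: "W \<subseteq> V" "\<forall>v\<in>W. v \<noteq> r \<longrightarrow> par v \<in> W"
        using less.prems by (auto simp: parent_closed_def)
      have "card ?W' < card W"
        using parent_deepest_in[OF prems l False] W_fin by (intro psubset_card_mono) auto
      then show ?thesis
        using less.hyps parent_closed_remove_children[OF prems l False]
          private_neighbour_split_remove_children[OF prems l False] by blast
    qed
  qed
qed

end

section \<open>Trees are rooted trees\<close>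

lemma connected_graph_parent_function:
  assumes conn: "connected_graph V E" and rV: "r \<in> V"
  obtains par dep where "dep r = 0"
    "\<And>v. v \<in> V \<Longrightarrow> v \<noteq> r \<Longrightarrow> par v \<in> V \<and> adj E v (par v) \<and> dep v = Suc (dep (par v))"
proof -
  define R where "R = {(x, y). x \<in> V \<and> y \<in> V \<and> adj E x y}"
  define dep where "dep v = (LEAST n. (r, v) \<in> R ^^ n)" for v
  have reach: "(r, v) \<in> R ^^ dep v" if "v \<in> V" for v
  proof -
    have "(r, v) \<in> R\<^sup>*"
      using conn rV that unfolding connected_graph_def R_def by auto
    then obtain n where "(r, v) \<in> R ^^ n"
      using rtrancl_power by blast
    then show ?thesis
      unfolding dep_def by (rule LeastI)
  qed
  have dep_le: "dep v \<le> n" if "(r, v) \<in> R ^^ n" for v n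
    unfolding dep_def using that by (rule Least_le)
  have "\<exists>y. (y, v) \<in> R \<and> dep v = Suc (dep y)" if v: "v \<in> V" "v \<noteq> r" for v
  proof -
    obtain k where k: "dep v = Suc k"
      using reach[OF v(1)] v(2) by (cases "dep v") auto
    then obtain y where y: "(r, y) \<in> R ^^ k" "(y, v) \<in> R"
      using reach[OF v(1)] by (auto elim: relpow_Suc_E)
    have "y \<in> V"
      using y(2) by (simp add: R_def)
    then have "(r, v) \<in> R ^^ Suc (dep y)"
      using y(2) by (rule relpow_Suc_I[OF reach])
    then show ?thesis
      using dep_le dep_le[OF y(1)] k y(2) by (metis Suc_le_mono le_antisym)
  qed
  then obtain par where par: "\<And>v. v \<in> V \<Longrightarrow> v \<noteq> r \<Longrightarrow> (par v, v) \<in> R \<and> dep v = Suc (dep (par v))"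
    by metis
  show thesis
  proof (rule that)
    show "dep r = 0"
      using dep_le[of r 0] by simp
  next
    fix v assume "v \<in> V" "v \<noteq> r"
    then show "par v \<in> V \<and> adj E v (par v) \<and> dep v = Suc (dep (par v))"
      using par adj_sym[of E v] by (auto simp: R_def)
  qed
qed

text \<open>Injecting the non-root vertices into \<open>E\<close> via their parent edges is onto by the edge count.\<close>
lemma tree_edges_are_parent_edges:
  assumes T: "is_tree V E" and rV: "r \<in> V"
    and parent: "\<And>v. v \<in> V \<Longrightarrow> v \<noteq> r \<Longrightarrow> par v \<in> V \<and> adj E v (par v) \<and> dep v = Suc (dep (par v))"
  shows "E = (\<lambda>v. {v, par v}) ` (V - {r})"
proof -
  have fin: "finite V" and edges: "\<forall>e\<in>E. e \<subseteq> V" and cE: "card E + 1 = card V"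
    using T by (auto simp: is_tree_def simple_graph_def)
  have "finite E"
    using edges fin by (metis Pow_iff finite_Pow_iff finite_subset subsetI)
  moreover have sub: "(\<lambda>v. {v, par v}) ` (V - {r}) \<subseteq> E"
    using parent by (auto simp: adj_def)
  moreover have "inj_on (\<lambda>v. {v, par v}) (V - {r})"
  proof (rule inj_onI, rule ccontr)
    fix v w assume vw: "v \<in> V - {r}" "w \<in> V - {r}" "{v, par v} = {w, par w}" "v \<noteq> w"
    then have "v = par w" "w = par v"
      by (auto simp: doubleton_eq_iff)
    then show False
      using parent vw by (metis Diff_iff insertCI lessI less_SucI not_less_iff_gr_or_eq)
  qed
  then have "card ((\<lambda>v. {v, par v}) ` (V - {r})) = card E"
    using card_image cE rV fin by fastforce
  ultimately show ?thesis
    using card_subset_eq[OF \<open>finite E\<close> sub] by simp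
qed

lemma is_tree_rooted:
  assumes T: "is_tree V E"
  obtains r par dep where "rooted_tree V E r par dep"
proof -
  have fin: "finite V" and edges: "\<forall>e\<in>E. card e = 2" and conn: "connected_graph V E"
    using T by (auto simp: is_tree_def simple_graph_def)
  obtain r where rV: "r \<in> V"
    using conn by (auto simp: connected_graph_def)
  obtain par dep where dep_root: "dep r = 0"
    and parent: "\<And>v. v \<in> V \<Longrightarrow> v \<noteq> r \<Longrightarrow> par v \<in> V \<and> adj E v (par v) \<and> dep v = Suc (dep (par v))"
    using connected_graph_parent_function[OF conn rV] by metis
  have "\<not> adj E u u" for u
    using edges by (force simp: adj_def)
  moreover have "(u \<noteq> r \<and> par u = v) \<or> (v \<noteq> r \<and> par v = u)" if "adj E u v" for u v
    using that tree_edges_are_parent_edges[OF T rV parent] by (auto simp: adj_def doubleton_eq_iff)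
  ultimately have "rooted_tree V E r par dep"
    by unfold_locales (use fin rV parent dep_root in auto)
  then show thesis
    by (rule that)
qed

theorem mainTheorem13:
  fixes V :: "'a set" and E :: "'a set set"
  assumes "is_tree V E"
  shows "gamma_DLD V E = independence_number V E"
proof -
  obtain r par dep where "rooted_tree V E r par dep"
    using is_tree_rooted[OF assms] by blast
  then interpret rooted_tree V E r par dep .
  have "parent_closed V"
    using parent_in_V by (auto simp: parent_closed_def)
  then obtain U S m where U: "private_neighbours E V U m"
    and S: "independent_set V E S" "card S + card U = card V"
    using parent_closed_private_neighbour_split unfolding private_neighbour_split_def by blast
  have "solid_locating_dominating V E (V - U)"
    using private_neighbours_solid_locating_dominating[OF _ U] root_in_V by blast
  moreover have "card (V - U) = card S"
    using U S(2) finite_V by (auto simp: private_neighbours_def card_Diff_subset finite_subset)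
  ultimately show ?thesis
    using gamma_DLD_eq_independence_numberI[OF finite_V card_independent_le_sld] S(1) by blast
qed

end
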